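(* (The push-forward formula for a product.) For all $f,g\in S$ and $u\in W$, the following identity holds in $Z$: \[ \pi\bullet\big(c(f)\cdot c(g)\big)=\sum_{w,v\in W}Y_{I_w}(f)\cdot u\big(Y_{I_v}(g)\big)\cdot\Big(\pi\bullet\big(\zeta^\vee_{I_w}\cdot\zeta(u)^\vee_{I_v}\big)\Big). \]
   Context: Setting: $\Phi$ a finite real root system (simple roots $\Pi$, positive/negative roots $\Phi_\pm$, Coxeter group $W$), $\mathcal O$ its coefficient ring, $\Lambda$ a free $\mathcal O$-module between root and weight lattices; $F$ a one-dimensional commutative formal group law over a commutative ring $R$; $S$ the formal group ring ($R[[x_\lambda]]_{\lambda\in\Lambda}$ modulo the closure of $x_0=0$, $x_{\lambda+\mu}=F(x_\lambda,x_\mu)$; no completion if $F$ polynomial; non-crystallographic case: $F$ additive, $R=\mathcal O$, $S=\mathrm{Sym}_{\mathcal O}\Lambda$), $W$ acting by $w(x_\lambda)=x_{w(\lambda)}$. Assume all $x_\alpha$ regular and $x_\alpha\mid x_{\alpha'}f\Rightarrow x_\alpha\mid f$ for distinct positive $\alpha,\alpha'$. $Q=S[1/x_\alpha]$; $Q_W$ twisted group algebra (basis $\delta_w$, $\delta_wq=w(q)\delta_w$) acting on $Q$ by $q\delta_w(f)=qw(f)$; $Y_\alpha=\frac1{x_{-\alpha}}+\frac1{x_\alpha}\delta_{s_\alpha}$ (so $Y_\alpha(f)=\frac f{x_{-\alpha}}+\frac{s_\alpha f}{x_\alpha}$), $Y_i=Y_{\alpha_i}$; fixed reduced words $I_w$,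 $Y_{I_w}$ the product, $I_w^{-1}$ reversed. $\mathbb D\subset Q_W$ generated by $S$ and the $Y_i$, free over $S$ on $\{Y_{I_w}\}$. $Z=\{(z_v)_v\in\bigoplus_{v\in W}S:z_{s_\alpha w}-z_w\in x_\alpha S\}$ (coordinatewise product), identified with $\mathrm{Hom}_S(\mathbb D,S)$ via $\phi\mapsto(\phi(\delta_v))_v$; Hecke action $q\delta_w\bullet(z_v)=(v(q)z_{vw})$, Weyl action $q\delta_w\odot(z_v)=(qw(z_{w^{-1}v}))$; $c(f)=(v(f))_v$. $x_\Pi=\prod_{\alpha\in\Phi_-}x_\alpha$; $\pi=\sum_w\frac1{w(x_\Pi)}\delta_w$ acting on $Z$ by $\bullet$. $\zeta^\vee_{I_w}\in Z$ corresponds to the functional on $\mathbb D$ with $Y_{I_u}\mapsto\delta^{Kr}_{w,u}$; $\zeta(u)^\vee_{I_w}=\delta_u\odot\zeta^\vee_{I_w}$. *)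

theory Defs
  imports "HOL-Analysis.Analysis"
begin

definition refl :: "'v::euclidean_space \<Rightarrow> 'v \<Rightarrow> 'v" where
  "refl \<alpha> v = v - (2 * (v \<bullet> \<alpha>) / (\<alpha> \<bullet> \<alpha>)) *\<^sub>R \<alpha>"

definition root_system :: "'v::euclidean_space set \<Rightarrow> bool" where
  "root_system \<Phi> \<longleftrightarrow> finite \<Phi> \<and> 0 \<notin> \<Phi> \<and>
     (\<forall>\<alpha>\<in>\<Phi>. refl \<alpha> ` \<Phi> = \<Phi>) \<and>
     (\<forall>\<alpha>\<in>\<Phi>. \<forall>c::real. c *\<^sub>R \<alpha> \<in> \<Phi> \<longleftrightarrow> c = 1 \<or> c = -1)"

definition positive_system :: "'v::euclidean_space set \<Rightarrow> 'v set \<Rightarrow> bool" where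
  "positive_system \<Phi> Pos \<longleftrightarrow>
     (\<exists>t. (\<forall>\<alpha>\<in>\<Phi>. \<alpha> \<bullet> t \<noteq> 0) \<and> Pos = {\<alpha>\<in>\<Phi>. \<alpha> \<bullet> t > 0})"

definition simple_roots :: "'v::euclidean_space set \<Rightarrow> 'v set" where
  "simple_roots Pos = {\<alpha>\<in>Pos. \<not> (\<exists>c. (\<forall>\<beta>\<in>Pos - {\<alpha>}. c \<beta> \<ge> (0::real)) \<and>
                                    \<alpha> = (\<Sum>\<beta>\<in>Pos - {\<alpha>}. c \<beta> *\<^sub>R \<beta>))}"

inductive_set coxeter_group :: "'v::euclidean_space set \<Rightarrow> ('v \<Rightarrow> 'v) set" for \<Phi> where
  cg_id: "id \<in> coxeter_group \<Phi>"
| cg_refl: "w \<in> coxeter_group \<Phi> \<Longrightarrow> \<alpha> \<in> \<Phi> \<Longrightarrow> refl \<alpha> \<circ> w \<in> coxeter_group \<Phi>"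

definition word_elem :: "'v::euclidean_space list \<Rightarrow> 'v \<Rightarrow> 'v" where
  "word_elem l = foldr (\<lambda>\<alpha> acc. refl \<alpha> \<circ> acc) l id"

definition reduced_words ::
  "('v \<Rightarrow> 'v) set \<Rightarrow> 'v::euclidean_space set \<Rightarrow> (('v \<Rightarrow> 'v) \<Rightarrow> 'v list) \<Rightarrow> bool" where
  "reduced_words W Simp I \<longleftrightarrow>
     (\<forall>w\<in>W. set (I w) \<subseteq> Simp \<and> word_elem (I w) = w \<and>
        (\<forall>l. set l \<subseteq> Simp \<and> word_elem l = w \<longrightarrow> length (I w) \<le> length l))"

definition qinv :: "'a::comm_ring_1 \<Rightarrow> 'a" where
  "qinv a = (THE b. a * b = 1)"

text \<open>Elements of the twisted group algebra Q_W: functions W -> Q (coefficients of the delta_w).\<close>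
definition delta :: "('v \<Rightarrow> 'v) \<Rightarrow> ('v \<Rightarrow> 'v) \<Rightarrow> 'a::comm_ring_1" where
  "delta w = (\<lambda>v. if v = w then 1 else 0)"

text \<open>Product in Q_W: (q delta_a)(q' delta_b) = q a(q') delta_(ab).\<close>
definition tmult :: "('v \<Rightarrow> 'v) set \<Rightarrow> (('v \<Rightarrow> 'v) \<Rightarrow> 'a \<Rightarrow> 'a) \<Rightarrow>
    (('v \<Rightarrow> 'v) \<Rightarrow> 'a::comm_ring_1) \<Rightarrow> (('v \<Rightarrow> 'v) \<Rightarrow> 'a) \<Rightarrow> ('v \<Rightarrow> 'v) \<Rightarrow> 'a" where
  "tmult W act X Y = (\<lambda>w. \<Sum>a\<in>W. \<Sum>b\<in>W. if a \<circ> b = w then X a * act a (Y b) else 0)"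

definition Yalpha :: "('v::euclidean_space \<Rightarrow> 'a::comm_ring_1) \<Rightarrow> 'v \<Rightarrow> ('v \<Rightarrow> 'v) \<Rightarrow> 'a" where
  "Yalpha x \<alpha> = (\<lambda>v. (if v = id then qinv (x (- \<alpha>)) else 0)
                    + (if v = refl \<alpha> then qinv (x \<alpha>) else 0))"

definition Yword :: "('v \<Rightarrow> 'v) set \<Rightarrow> (('v \<Rightarrow> 'v) \<Rightarrow> 'a \<Rightarrow> 'a) \<Rightarrow>
    ('v::euclidean_space \<Rightarrow> 'a::comm_ring_1) \<Rightarrow> 'v list \<Rightarrow> ('v \<Rightarrow> 'v) \<Rightarrow> 'a" where
  "Yword W act x l = foldr (\<lambda>\<alpha> acc. tmult W act (Yalpha x \<alpha>) acc) l (delta id)"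

definition app_op :: "('v \<Rightarrow> 'v) set \<Rightarrow> (('v \<Rightarrow> 'v) \<Rightarrow> 'a \<Rightarrow> 'a) \<Rightarrow>
    (('v \<Rightarrow> 'v) \<Rightarrow> 'a::comm_ring_1) \<Rightarrow> 'a \<Rightarrow> 'a" where
  "app_op W act X f = (\<Sum>w\<in>W. X w * act w f)"

definition cvec :: "('v \<Rightarrow> 'v) set \<Rightarrow> (('v \<Rightarrow> 'v) \<Rightarrow> 'a \<Rightarrow> 'a) \<Rightarrow> 'a::comm_ring_1 \<Rightarrow> ('v \<Rightarrow> 'v) \<Rightarrow> 'a" where
  "cvec W act f = (\<lambda>v. if v \<in> W then act v f else 0)"

definition hecke :: "('v \<Rightarrow> 'v) set \<Rightarrow> (('v \<Rightarrow> 'v) \<Rightarrow> 'a \<Rightarrow> 'a) \<Rightarrow>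
    (('v \<Rightarrow> 'v) \<Rightarrow> 'a::comm_ring_1) \<Rightarrow> (('v \<Rightarrow> 'v) \<Rightarrow> 'a) \<Rightarrow> ('v \<Rightarrow> 'v) \<Rightarrow> 'a" where
  "hecke W act X z = (\<lambda>v. if v \<in> W then (\<Sum>w\<in>W. act v (X w) * z (v \<circ> w)) else 0)"

definition weyl :: "('v \<Rightarrow> 'v) set \<Rightarrow> (('v \<Rightarrow> 'v) \<Rightarrow> 'a \<Rightarrow> 'a) \<Rightarrow>
    (('v \<Rightarrow> 'v) \<Rightarrow> 'a::comm_ring_1) \<Rightarrow> (('v \<Rightarrow> 'v) \<Rightarrow> 'a) \<Rightarrow> ('v \<Rightarrow> 'v) \<Rightarrow> 'a" where
  "weyl W act X z = (\<lambda>v. if v \<in> W then (\<Sum>w\<in>W. X w * act w (z (inv w \<circ> v))) else 0)"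

text \<open>pi = sum_w 1/w(x_Pi) delta_w, x_Pi = product of x_alpha over the negative roots.\<close>
definition piel :: "(('v \<Rightarrow> 'v) \<Rightarrow> 'a \<Rightarrow> 'a) \<Rightarrow> ('v \<Rightarrow> 'a::comm_ring_1) \<Rightarrow> 'v set \<Rightarrow> ('v \<Rightarrow> 'v) \<Rightarrow> 'a" where
  "piel act x Neg = (\<lambda>w. qinv (act w (\<Prod>\<alpha>\<in>Neg. x \<alpha>)))"

text \<open>zeta-dual_(I_w): the vector (phi(delta_v))_v of the functional phi with
  phi(Y_(I_u)) = Kronecker delta (w,u); phi is extended Q-linearly, so
  phi(Y_(I_u)) = sum_v (coefficient of delta_v in Y_(I_u)) * phi(delta_v).\<close>
definition zeta :: "('v \<Rightarrow> 'v) set \<Rightarrow> (('v \<Rightarrow> 'v) \<Rightarrow> 'a \<Rightarrow> 'a) \<Rightarrow>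
    ('v::euclidean_space \<Rightarrow> 'a::comm_ring_1) \<Rightarrow> (('v \<Rightarrow> 'v) \<Rightarrow> 'v list) \<Rightarrow> ('v \<Rightarrow> 'v)
    \<Rightarrow> ('v \<Rightarrow> 'v) \<Rightarrow> 'a" where
  "zeta W act x I w = (THE z. (\<forall>v. v \<notin> W \<longrightarrow> z v = 0) \<and>
      (\<forall>u\<in>W. (\<Sum>v\<in>W. Yword W act x (I u) v * z v) = (if u = w then 1 else 0)))"

end

theory Submission
  imports Defs "HOL-Library.Sublist"
begin

(* Write Y_{I_u} = \<Sum>_v M u v \<delta>_v. Expanding Y_{\<alpha>} Y_l shows that M u v \<noteq> 0 only if v is
   represented by a subword of I_u, and M u u is a product of twisted inverses of the x_\<alpha>. As
   I_u is reduced, M is triangular with respect to the length of I_u with invertible diagonal,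
   hence invertible, and the \<zeta>^\<or>_{I_w} are the columns of its inverse. Inverting gives the
   expansion c(f) = \<Sum>_w Y_{I_w}(f) \<zeta>^\<or>_{I_w}; evaluating it at u^-1 t and applying u gives
   c(g) = \<Sum>_v u(Y_{I_v}(g)) \<zeta>(u)^\<or>_{I_v}. Multiplying the two expansions coordinatewise and
   using that \<pi>\<bullet> is S-linear and only sees coordinates in W yields the formula. *)

lemma refl_refl [simp]: "refl a (refl a v) = v"
proof (cases "a = 0")
  case False
  then have "a \<bullet> a \<noteq> 0" by simp
  then show ?thesis
    unfolding refl_def by (simp add: inner_diff_left algebra_simps scaleR_diff_left)
qed (simp add: refl_def)

lemma refl_comp_refl [simp]: "refl a \<circ> refl a = id"
  by (simp add: fun_eq_iff)

lemma linear_refl: "linear (refl a)"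
  unfolding refl_def
  by (rule linearI) (simp_all add: inner_add_left algebra_simps add_divide_distrib scaleR_add_left)

lemma refl_in_coxeter_group: "\<alpha> \<in> P \<Longrightarrow> refl \<alpha> \<in> coxeter_group P"
  using coxeter_group.cg_refl[OF coxeter_group.cg_id] by simp

lemma coxeter_group_comp:
  "v \<in> coxeter_group P \<Longrightarrow> w \<in> coxeter_group P \<Longrightarrow> v \<circ> w \<in> coxeter_group P"
  by (induction v rule: coxeter_group.induct) (auto simp: comp_assoc intro: coxeter_group.intros)

lemma word_elem_Cons: "word_elem (\<alpha> # l) = refl \<alpha> \<circ> word_elem l"
  by (simp add: word_elem_def)

lemma word_elem_in_coxeter_group: "set l \<subseteq> P \<Longrightarrow> word_elem l \<in> coxeter_group P"
  by (induction l) (auto simp: word_elem_def intro: coxeter_group.intros)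

lemma coxeter_group_inv:
  assumes "w \<in> coxeter_group P"
  shows "inv w \<in> coxeter_group P" "w \<circ> inv w = id"
proof -
  from assms have "\<exists>w'\<in>coxeter_group P. w \<circ> w' = id \<and> w' \<circ> w = id"
  proof (induction w rule: coxeter_group.induct)
    case cg_id
    show ?case by (rule bexI[of _ id]) (simp_all add: coxeter_group.cg_id)
  next
    case (cg_refl w \<alpha>)
    then obtain w' where w': "w' \<in> coxeter_group P" "w \<circ> w' = id" "w' \<circ> w = id" by blast
    have "(refl \<alpha> \<circ> w) \<circ> (w' \<circ> refl \<alpha>) = id"
      by (simp add: fun_eq_iff pointfree_idE[OF w'(2)])
    moreover have "(w' \<circ> refl \<alpha>) \<circ> (refl \<alpha> \<circ> w) = id"
      by (simp add: fun_eq_iff pointfree_idE[OF w'(3)])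
    ultimately show ?case
      using coxeter_group_comp[OF w'(1) refl_in_coxeter_group[OF cg_refl.hyps(2)]] by blast
  qed
  then obtain w' where "w' \<in> coxeter_group P" "w \<circ> w' = id" "w' \<circ> w = id" by blast
  moreover have "inv w = w'" using inv_unique_comp calculation(2,3) .
  ultimately show "inv w \<in> coxeter_group P" "w \<circ> inv w = id" by simp_all
qed

lemma linear_coxeter_group: "w \<in> coxeter_group P \<Longrightarrow> linear w"
proof (induction w rule: coxeter_group.induct)
  case cg_id
  show ?case by (rule linearI) auto
next
  case (cg_refl w \<alpha>)
  show ?case using linear_compose[OF cg_refl.IH linear_refl] .
qed

lemma coxeter_group_fixes_orthogonal:
  "w \<in> coxeter_group P \<Longrightarrow> \<forall>\<beta>\<in>P. v \<bullet> \<beta> = 0 \<Longrightarrow> w v = v"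
  by (induction w rule: coxeter_group.induct) (auto simp: refl_def)

lemma coxeter_group_permutes:
  "w \<in> coxeter_group P \<Longrightarrow> \<forall>\<alpha>\<in>P. refl \<alpha> ` P = P \<Longrightarrow> w ` P \<subseteq> P"
  by (induction w rule: coxeter_group.induct) (auto simp: image_comp[symmetric])

text \<open>An element of the group is linear and fixes the orthogonal complement of the span
  of \<open>P\<close>, so it is determined by its restriction to \<open>P\<close>, which is a map \<open>P \<rightarrow> P\<close>.\<close>
lemma finite_coxeter_group:
  assumes "finite P" "\<forall>\<alpha>\<in>P. refl \<alpha> ` P = P"
  shows "finite (coxeter_group P)"
proof -
  have inj: "inj_on (\<lambda>w. restrict w P) (coxeter_group P)"
  proof (rule inj_onI)
    fix w1 w2
    assume w: "w1 \<in> coxeter_group P" "w2 \<in> coxeter_group P" "restrict w1 P = restrict w2 P"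
    note lin = linear_coxeter_group[OF w(1)] linear_coxeter_group[OF w(2)]
    have on_P: "w1 b = w2 b" if "b \<in> P" for b
      using w(3) that by (metis restrict_apply')
    show "w1 = w2"
    proof
      fix v
      obtain y z where yz: "y \<in> span P" "\<And>w. w \<in> span P \<Longrightarrow> orthogonal z w" "v = y + z"
        using orthogonal_subspace_decomp_exists by blast
      have "\<forall>\<beta>\<in>P. z \<bullet> \<beta> = 0"
        using yz(2) span_base orthogonal_def by blast
      then have "w1 z = z" "w2 z = z"
        using coxeter_group_fixes_orthogonal w(1,2) by blast+
      moreover have "w1 y = w2 y"
        using linear_eq_on_span[OF lin on_P yz(1)] .
      ultimately show "w1 v = w2 v"
        using yz(3) linear_add[OF lin(1)] linear_add[OF lin(2)] by simp
    qed
  qed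
  have "(\<lambda>w. restrict w P) ` coxeter_group P \<subseteq> (\<Pi>\<^sub>E i\<in>P. P)"
  proof
    fix f assume "f \<in> (\<lambda>w. restrict w P) ` coxeter_group P"
    then obtain w where "w \<in> coxeter_group P" "f = restrict w P" by blast
    with coxeter_group_permutes[OF this(1) assms(2)] show "f \<in> (\<Pi>\<^sub>E i\<in>P. P)" by auto
  qed
  moreover have "finite (\<Pi>\<^sub>E i\<in>P. P)"
    using assms(1) by (simp add: finite_PiE)
  ultimately have "finite ((\<lambda>w. restrict w P) ` coxeter_group P)"
    by (rule finite_subset)
  then show ?thesis
    using inj by (rule finite_imageD)
qed

lemma mult_qinv:
  fixes a :: "'a::comm_ring_1"
  assumes "a dvd 1"
  shows "a * qinv a = 1"
proof -
  obtain b where b: "1 = a * b" using assms by (rule dvdE)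
  have "\<exists>!c. a * c = 1"
  proof
    show "a * b = 1" using b by simp
  next
    fix c assume "a * c = 1"
    then have "b = b * (a * c)" by simp
    also have "\<dots> = (a * b) * c" by (simp add: ac_simps)
    also have "\<dots> = c" by (simp flip: b)
    finally show "c = b" by simp
  qed
  then show ?thesis unfolding qinv_def by (rule theI')
qed

lemma qinv_dvd_one:
  fixes a :: "'a::comm_ring_1"
  assumes "a dvd 1"
  shows "qinv a dvd 1"
proof (rule dvdI)
  show "1 = qinv a * a" using mult_qinv[OF assms] by (simp add: mult.commute)
qed

definition triangular :: "'w set \<Rightarrow> ('w \<Rightarrow> nat) \<Rightarrow> ('w \<Rightarrow> 'w \<Rightarrow> 'a::comm_ring_1) \<Rightarrow> bool" where
  "triangular W len M \<longleftrightarrow>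
     (\<forall>u\<in>W. \<forall>v\<in>W. M u v \<noteq> 0 \<longrightarrow> v = u \<or> len v < len u) \<and> (\<forall>u\<in>W. M u u dvd 1)"

lemma triangular_row_sum:
  assumes "finite W" "triangular W len M" "u \<in> W"
    and "\<And>v. v \<in> W \<Longrightarrow> len v < len u \<Longrightarrow> z v = 0"
  shows "(\<Sum>v\<in>W. M u v * z v) = M u u * z u"
proof -
  have "(\<Sum>v\<in>W - {u}. M u v * z v) = 0"
  proof (rule sum.neutral, intro ballI)
    fix v assume v: "v \<in> W - {u}"
    show "M u v * z v = 0"
    proof (cases "M u v = 0")
      case False
      then have "len v < len u" using assms(2,3) v unfolding triangular_def by auto
      then show ?thesis using assms(4) v by simp
    qed simp
  qed
  then show ?thesis
    using assms(1,3) by (simp add: sum.remove)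
qed

lemma triangular_solution_unique:
  assumes "finite W" "triangular W len M"
    and "\<And>u. u \<in> W \<Longrightarrow> (\<Sum>v\<in>W. M u v * z v) = 0"
  shows "u \<in> W \<Longrightarrow> z u = 0"
proof (induction "len u" arbitrary: u rule: less_induct)
  case less
  have "(\<Sum>v\<in>W. M u v * z v) = M u u * z u"
    by (rule triangular_row_sum[OF assms(1,2) less.prems]) (simp add: less.hyps)
  then have Mz: "M u u * z u = 0"
    using assms(3)[OF less.prems] by simp
  obtain b where b: "1 = M u u * b"
    using assms(2) less.prems unfolding triangular_def by (blast elim: dvdE)
  have "z u = (M u u * b) * z u" by (simp flip: b)
  also have "\<dots> = b * (M u u * z u)" by (simp add: ac_simps)
  finally show "z u = 0" using Mz by simp
qed

lemma triangular_solvable: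
  assumes "finite W" "triangular W len M"
  shows "\<exists>z. (\<forall>v. v \<notin> W \<longrightarrow> z v = 0) \<and> (\<forall>u\<in>W. (\<Sum>v\<in>W. M u v * z v) = c u)"
proof -
  have partial: "\<exists>z. (\<forall>v. v \<notin> W \<or> n \<le> len v \<longrightarrow> z v = 0) \<and>
            (\<forall>u\<in>W. len u < n \<longrightarrow> (\<Sum>v\<in>W. M u v * z v) = c u)" for n
  proof (induction n)
    case 0
    show ?case by (intro exI[of _ "\<lambda>_. 0"]) simp
  next
    case (Suc n)
    then obtain z where z_supp: "\<forall>v. v \<notin> W \<or> n \<le> len v \<longrightarrow> z v = 0"
      and z_sol: "\<forall>u\<in>W. len u < n \<longrightarrow> (\<Sum>v\<in>W. M u v * z v) = c u" by blast
    \<comment> \<open>correct \<open>z\<close> on the level \<open>n\<close>, which does not disturb the lower rows\<close>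
    define d where "d v = (if v \<in> W \<and> len v = n
        then qinv (M v v) * (c v - (\<Sum>v'\<in>W. M v v' * z v')) else 0)" for v
    have row_d: "(\<Sum>v\<in>W. M u v * d v) = M u u * d u" if "u \<in> W" "len u \<le> n" for u
    proof (rule triangular_row_sum[OF assms that(1)])
      fix v assume "len v < len u"
      then show "d v = 0" using that(2) by (simp add: d_def)
    qed
    have sol: "(\<Sum>v\<in>W. M u v * (z v + d v)) = c u" if u: "u \<in> W" "len u < Suc n" for u
    proof (cases "len u < n")
      case True
      then have "d u = 0" by (simp add: d_def)
      then show ?thesis
        using z_sol u True row_d[OF u(1)] by (simp add: distrib_left sum.distrib)
    next
      case False
      have "M u u dvd 1" using assms(2) u(1) unfolding triangular_def by blast
      moreover have "d u = qinv (M u u) * (c u - (\<Sum>v\<in>W. M u v * z v))"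
        using False u by (simp add: d_def)
      ultimately have "M u u * d u = c u - (\<Sum>v\<in>W. M u v * z v)"
        by (simp add: mult.assoc[symmetric] mult_qinv)
      then show ?thesis
        using u row_d[OF u(1)] by (simp add: distrib_left sum.distrib)
    qed
    have supp: "z v + d v = 0" if "v \<notin> W \<or> Suc n \<le> len v" for v
    proof -
      have "z v = 0" using z_supp that by auto
      moreover have "d v = 0" using that by (auto simp: d_def)
      ultimately show ?thesis by simp
    qed
    show ?case
      using sol supp by (intro exI[of _ "\<lambda>v. z v + d v"]) auto
  qed
  define N where "N = Suc (Max (len ` W))"
  have below: "len u < N" if "u \<in> W" for u
    using assms(1) that by (simp add: N_def le_imp_less_Suc)
  obtain z where "\<forall>v. v \<notin> W \<or> N \<le> len v \<longrightarrow> z v = 0"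
      and "\<forall>u\<in>W. len u < N \<longrightarrow> (\<Sum>v\<in>W. M u v * z v) = c u"
    using partial[of N] by blast
  then show ?thesis
    using below by (intro exI[of _ z]) blast
qed

definition dual_basis_vector :: "'w set \<Rightarrow> ('w \<Rightarrow> 'w \<Rightarrow> 'a::comm_ring_1) \<Rightarrow> 'w \<Rightarrow> 'w \<Rightarrow> 'a" where
  "dual_basis_vector W M w = (THE z. (\<forall>v. v \<notin> W \<longrightarrow> z v = 0) \<and>
      (\<forall>u\<in>W. (\<Sum>v\<in>W. M u v * z v) = (if u = w then 1 else 0)))"

lemma matrix_mult_dual_basis_vector:
  assumes "finite W" "triangular W len M" "u \<in> W"
  shows "(\<Sum>v\<in>W. M u v * dual_basis_vector W M w v) = of_bool (u = w)"
proof -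
  let ?P = "\<lambda>z. (\<forall>v. v \<notin> W \<longrightarrow> z v = 0) \<and> (\<forall>u\<in>W. (\<Sum>v\<in>W. M u v * z v) = (if u = w then 1 else 0))"
  have "\<exists>!z. ?P z"
  proof (rule ex_ex1I)
    show "\<exists>z. ?P z" by (rule triangular_solvable[OF assms(1,2)])
  next
    fix z1 z2 assume "?P z1" "?P z2"
    then have "\<And>u. u \<in> W \<Longrightarrow> (\<Sum>v\<in>W. M u v * (z1 v - z2 v)) = 0"
      by (simp add: right_diff_distrib sum_subtractf)
    then have diff: "z1 u - z2 u = 0" if "u \<in> W" for u
      using triangular_solution_unique[OF assms(1,2), where z="\<lambda>v. z1 v - z2 v"] that by blast
    show "z1 = z2"
    proof
      fix v
      show "z1 v = z2 v"
        using \<open>?P z1\<close> \<open>?P z2\<close> diff by (cases "v \<in> W") auto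
    qed
  qed
  then have "?P (dual_basis_vector W M w)"
    unfolding dual_basis_vector_def by (rule theI')
  then show ?thesis
    using assms(3) by simp
qed

lemma dual_basis_expansion:
  assumes "finite W" "triangular W len M" "t \<in> W"
  shows "c t = (\<Sum>w\<in>W. (\<Sum>v\<in>W. M w v * c v) * dual_basis_vector W M w t)"
proof -
  define y where "y t = (\<Sum>w\<in>W. (\<Sum>v\<in>W. M w v * c v) * dual_basis_vector W M w t)" for t
  have "(\<Sum>v\<in>W. M u v * (c v - y v)) = 0" if "u \<in> W" for u
  proof -
    have "(\<Sum>v\<in>W. M u v * y v)
        = (\<Sum>w\<in>W. (\<Sum>v'\<in>W. M w v' * c v') * (\<Sum>v\<in>W. M u v * dual_basis_vector W M w v))"
      unfolding y_def sum_distrib_left by (subst sum.swap) (simp add: ac_simps)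
    also have "\<dots> = (\<Sum>v\<in>W. M u v * c v)"
      using matrix_mult_dual_basis_vector[OF assms(1,2) that] assms(1) that by simp
    finally show ?thesis by (simp add: right_diff_distrib sum_subtractf)
  qed
  then have "c t - y t = 0"
    using triangular_solution_unique[OF assms(1,2), where z="\<lambda>v. c v - y v"] assms(3) by blast
  then show ?thesis unfolding y_def by simp
qed

definition subword_reduced :: "'v::euclidean_space list \<Rightarrow> bool" where
  "subword_reduced l \<longleftrightarrow> (\<forall>l'. subseq l' l \<longrightarrow> word_elem l' = word_elem l \<longrightarrow> l' = l)"

lemma subword_reduced_Cons:
  assumes "subword_reduced (\<alpha> # l)"
  shows "subword_reduced l"
  unfolding subword_reduced_def
proof (intro allI impI)
  fix l' assume "subseq l' l" "word_elem l' = word_elem l"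
  then have "subseq (\<alpha> # l') (\<alpha> # l)" "word_elem (\<alpha> # l') = word_elem (\<alpha> # l)"
    by (simp_all add: word_elem_Cons)
  then have "\<alpha> # l' = \<alpha> # l"
    using assms unfolding subword_reduced_def by blast
  then show "l' = l" by simp
qed

lemma subword_reduced_if_shortest:
  assumes "set l \<subseteq> A" "\<And>l'. set l' \<subseteq> A \<Longrightarrow> word_elem l' = word_elem l \<Longrightarrow> length l \<le> length l'"
  shows "subword_reduced l"
  unfolding subword_reduced_def
proof (intro allI impI)
  fix l' assume l': "subseq l' l" "word_elem l' = word_elem l"
  have "set l' \<subseteq> A" using l'(1) assms(1) by (auto elim: list_emb_set)
  then have "length l \<le> length l'" using assms(2) l'(2) by blast
  then show "l' = l" using l'(1) list_emb_length[OF l'(1)] by (simp add: subseq_same_length)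
qed

lemma zeta_eq_dual_basis_vector:
  "zeta W act x I w = dual_basis_vector W (\<lambda>u. Yword W act x (I u)) w"
  by (simp add: zeta_def dual_basis_vector_def)

lemma weyl_delta:
  fixes z :: "('v \<Rightarrow> 'v) \<Rightarrow> 'a::comm_ring_1"
  assumes "finite W" "u \<in> W" "t \<in> W"
  shows "weyl W act (delta u) z t = act u (z (inv u \<circ> t))"
proof -
  have "(if w = u then 1 else 0) * a = (if w = u then a else 0)" for w and a :: 'a
    by simp
  then show ?thesis
    using assms unfolding weyl_def delta_def by simp
qed

lemma hecke_cong:
  assumes "\<forall>v\<in>W. \<forall>w\<in>W. v \<circ> w \<in> W" "\<And>t. t \<in> W \<Longrightarrow> z t = z' t"
  shows "hecke W act X z = hecke W act X z'"
  unfolding hecke_def using assms by (auto intro!: sum.cong)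

lemma hecke_sum: "hecke W act X (\<lambda>t. \<Sum>i\<in>A. z i t) y = (\<Sum>i\<in>A. hecke W act X (z i) y)"
  unfolding hecke_def by (simp add: sum_distrib_left sum.swap[of _ W])

lemma hecke_scale: "hecke W act X (\<lambda>t. a * z t) y = a * hecke W act X z y"
  unfolding hecke_def by (simp add: sum_distrib_left ac_simps)

locale coxeter_group_action =
  fixes P :: "'v::euclidean_space set" and act :: "('v \<Rightarrow> 'v) \<Rightarrow> 'a::comm_ring_1 \<Rightarrow> 'a"
  assumes finite_group: "finite (coxeter_group P)"
    and act_id: "act id a = a"
    and act_comp: "v \<in> coxeter_group P \<Longrightarrow> w \<in> coxeter_group P \<Longrightarrow> act (v \<circ> w) a = act v (act w a)"
    and act_add: "w \<in> coxeter_group P \<Longrightarrow> act w (a + b) = act w a + act w b"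
    and act_mult: "w \<in> coxeter_group P \<Longrightarrow> act w (a * b) = act w a * act w b"
    and act_one: "w \<in> coxeter_group P \<Longrightarrow> act w 1 = 1"
begin

lemma act_zero: "w \<in> coxeter_group P \<Longrightarrow> act w 0 = 0"
  using act_add[of w 0 0] by simp

lemma act_sum: "w \<in> coxeter_group P \<Longrightarrow> act w (\<Sum>i\<in>A. h i) = (\<Sum>i\<in>A. act w (h i))"
  using sum_comp_morphism[of "act w" h A] by (simp add: act_zero act_add)

lemma act_dvd_one:
  assumes "w \<in> coxeter_group P" "a dvd 1"
  shows "act w a dvd 1"
proof -
  obtain b where "1 = a * b" using assms(2) by (rule dvdE)
  then have "1 = act w a * act w b"
    using act_one[OF assms(1)] act_mult[OF assms(1), of a b] by simp
  then show ?thesis by (rule dvdI)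
qed

lemma tmult_Yalpha:
  assumes "\<alpha> \<in> P" "w \<in> coxeter_group P"
  shows "tmult (coxeter_group P) act (Yalpha x \<alpha>) Y w
       = qinv (x (- \<alpha>)) * Y w + qinv (x \<alpha>) * act (refl \<alpha>) (Y (refl \<alpha> \<circ> w))"
proof -
  let ?W = "coxeter_group P" and ?s = "refl \<alpha>"
  define G where "G c = (\<Sum>b\<in>?W. if c \<circ> b = w then act c (Y b) else 0)" for c
  have "tmult ?W act (Yalpha x \<alpha>) Y w = (\<Sum>c\<in>?W. Yalpha x \<alpha> c * G c)"
    unfolding tmult_def G_def sum_distrib_left by (intro sum.cong refl) (simp add: if_distrib)
  also have "\<dots> = (\<Sum>c\<in>?W. (if c = id then qinv (x (- \<alpha>)) * G c else 0)
                        + (if c = ?s then qinv (x \<alpha>) * G c else 0))"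
    unfolding Yalpha_def by (intro sum.cong refl) (simp add: distrib_right)
  also have "\<dots> = qinv (x (- \<alpha>)) * G id + qinv (x \<alpha>) * G ?s"
    using finite_group refl_in_coxeter_group[OF assms(1)] coxeter_group.cg_id[of P]
    by (simp add: sum.distrib)
  also have "G id = Y w"
    using finite_group assms(2) by (simp add: G_def act_id)
  also have "G ?s = act ?s (Y (?s \<circ> w))"
  proof -
    have "?s \<circ> b = w \<longleftrightarrow> b = ?s \<circ> w" for b
    proof
      assume "?s \<circ> b = w"
      then have "?s \<circ> (?s \<circ> b) = ?s \<circ> w" by simp
      then show "b = ?s \<circ> w" by (simp add: comp_assoc[symmetric])
    qed (simp add: comp_assoc[symmetric])
    then show ?thesis
      using finite_group coxeter_group_comp[OF refl_in_coxeter_group[OF assms(1)] assms(2)]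
      by (simp add: G_def)
  qed
  finally show ?thesis .
qed

lemma Yword_Cons:
  assumes "\<alpha> \<in> P" "w \<in> coxeter_group P"
  shows "Yword (coxeter_group P) act x (\<alpha> # l) w
       = qinv (x (- \<alpha>)) * Yword (coxeter_group P) act x l w
         + qinv (x \<alpha>) * act (refl \<alpha>) (Yword (coxeter_group P) act x l (refl \<alpha> \<circ> w))"
  using tmult_Yalpha[OF assms] by (simp add: Yword_def)

lemma Yword_support:
  assumes "set l \<subseteq> P" "w \<in> coxeter_group P" "Yword (coxeter_group P) act x l w \<noteq> 0"
  shows "\<exists>l'. subseq l' l \<and> word_elem l' = w"
  using assms
proof (induction l arbitrary: w)
  case Nil
  then have "w = id" by (simp add: Yword_def delta_def split: if_splits)
  then show ?case by (intro exI[of _ "[]"]) (simp add: word_elem_def)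
next
  case (Cons \<alpha> l)
  let ?s = "refl \<alpha>"
  have \<alpha>: "\<alpha> \<in> P" and l: "set l \<subseteq> P" using Cons.prems(1) by auto
  show ?case
  proof (cases "Yword (coxeter_group P) act x l w = 0")
    case False
    with Cons.IH[OF l Cons.prems(2)] show ?thesis by (auto intro: list_emb_Cons)
  next
    case True
    then have "Yword (coxeter_group P) act x l (?s \<circ> w) \<noteq> 0"
      using Cons.prems Yword_Cons[OF \<alpha>] act_zero[OF refl_in_coxeter_group[OF \<alpha>]] by auto
    then obtain l' where "subseq l' l" "word_elem l' = ?s \<circ> w"
      using Cons.IH[OF l coxeter_group_comp[OF refl_in_coxeter_group[OF \<alpha>] Cons.prems(2)]] by blast
    then show ?thesis
      by (intro exI[of _ "\<alpha> # l'"]) (simp add: word_elem_Cons comp_assoc[symmetric])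
  qed
qed

lemma Yword_diagonal_dvd_one:
  assumes "set l \<subseteq> P" "subword_reduced l" "\<forall>\<alpha>\<in>set l. x \<alpha> dvd 1"
  shows "Yword (coxeter_group P) act x l (word_elem l) dvd 1"
  using assms
proof (induction l)
  case Nil
  then show ?case by (simp add: Yword_def delta_def word_elem_def id_def)
next
  case (Cons \<alpha> l)
  let ?s = "refl \<alpha>" and ?e = "word_elem l" and ?Y = "Yword (coxeter_group P) act x l"
  have \<alpha>: "\<alpha> \<in> P" and l: "set l \<subseteq> P" using Cons.prems(1) by auto
  have "?Y (?s \<circ> ?e) = 0"
    \<comment> \<open>otherwise a proper subword of \<open>\<alpha> # l\<close> would represent \<open>word_elem (\<alpha> # l)\<close>\<close>
  proof (rule ccontr)
    assume "?Y (?s \<circ> ?e) \<noteq> 0"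
    then obtain l' where l': "subseq l' l" "word_elem l' = ?s \<circ> ?e"
      using Yword_support[OF l coxeter_group_comp[OF refl_in_coxeter_group[OF \<alpha>]
          word_elem_in_coxeter_group[OF l]]] by blast
    then have "l' = \<alpha> # l"
      using Cons.prems(2) unfolding subword_reduced_def by (simp add: word_elem_Cons list_emb_Cons)
    then show False
      using list_emb_length[OF l'(1)] by simp
  qed
  then have "Yword (coxeter_group P) act x (\<alpha> # l) (word_elem (\<alpha> # l)) = qinv (x \<alpha>) * act ?s (?Y ?e)"
    using Yword_Cons[OF \<alpha> word_elem_in_coxeter_group[OF Cons.prems(1)]]
    by (simp add: word_elem_Cons comp_assoc[symmetric])
  moreover have "qinv (x \<alpha>) dvd 1"
    using Cons.prems(3) by (simp add: qinv_dvd_one)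
  moreover have "act ?s (?Y ?e) dvd 1"
    using Cons.IH[OF l subword_reduced_Cons[OF Cons.prems(2)]] Cons.prems(3)
      act_dvd_one[OF refl_in_coxeter_group[OF \<alpha>]] by simp
  ultimately show ?case
    using mult_dvd_mono[of "qinv (x \<alpha>)" 1 "act ?s (?Y ?e)" 1] by simp
qed

lemma triangular_Yword:
  assumes red: "reduced_words (coxeter_group P) A I" and "A \<subseteq> P" "\<forall>\<alpha>\<in>A. x \<alpha> dvd 1"
  shows "triangular (coxeter_group P) (\<lambda>w. length (I w)) (\<lambda>w. Yword (coxeter_group P) act x (I w))"
  unfolding triangular_def
proof (intro conjI ballI impI)
  fix u assume u: "u \<in> coxeter_group P"
  have I: "set (I u) \<subseteq> A" "word_elem (I u) = u"
    "\<And>l. set l \<subseteq> A \<Longrightarrow> word_elem l = u \<Longrightarrow> length (I u) \<le> length l"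
    using red u unfolding reduced_words_def by auto
  have IP: "set (I u) \<subseteq> P" using I(1) assms(2) by blast
  show "Yword (coxeter_group P) act x (I u) u dvd 1"
    using Yword_diagonal_dvd_one[OF IP subword_reduced_if_shortest[OF I(1)]] I(2,3) assms(3) I(1)
    by auto
  fix v assume v: "v \<in> coxeter_group P" "Yword (coxeter_group P) act x (I u) v \<noteq> 0"
  then obtain l' where l': "subseq l' (I u)" "word_elem l' = v"
    using Yword_support[OF IP] by blast
  show "v = u \<or> length (I v) < length (I u)"
  proof (cases "l' = I u")
    case True
    then show ?thesis using l'(2) I(2) by simp
  next
    case False
    then have "length l' < length (I u)"
      using l'(1) list_emb_length[OF l'(1)] subseq_same_length by fastforce
    moreover have "set l' \<subseteq> A" using l'(1) I(1) by (auto elim: list_emb_set)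
    then have "length (I v) \<le> length l'"
      using red v(1) l'(2) unfolding reduced_words_def by blast
    ultimately show ?thesis by simp
  qed
qed

lemma act_eq_sum_zeta:
  assumes "triangular (coxeter_group P) len (\<lambda>w. Yword (coxeter_group P) act x (I w))"
    and "t \<in> coxeter_group P"
  shows "act t f = (\<Sum>w\<in>coxeter_group P.
           app_op (coxeter_group P) act (Yword (coxeter_group P) act x (I w)) f
           * zeta (coxeter_group P) act x I w t)"
  using dual_basis_expansion[OF finite_group assms, of "\<lambda>v. act v f"]
  by (simp add: app_op_def zeta_eq_dual_basis_vector)

lemma act_eq_sum_weyl_zeta:
  assumes "triangular (coxeter_group P) len (\<lambda>w. Yword (coxeter_group P) act x (I w))"
    and u: "u \<in> coxeter_group P" and t: "t \<in> coxeter_group P"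
  shows "act t g = (\<Sum>v\<in>coxeter_group P.
           act u (app_op (coxeter_group P) act (Yword (coxeter_group P) act x (I v)) g)
           * weyl (coxeter_group P) act (delta u) (zeta (coxeter_group P) act x I v) t)"
proof -
  have t': "inv u \<circ> t \<in> coxeter_group P"
    using coxeter_group_comp[OF coxeter_group_inv(1)[OF u] t] .
  have "act t g = act u (act (inv u \<circ> t) g)"
    using act_comp[OF u t'] coxeter_group_inv(2)[OF u] by (simp add: comp_assoc[symmetric])
  also have "act (inv u \<circ> t) g = (\<Sum>v\<in>coxeter_group P.
      app_op (coxeter_group P) act (Yword (coxeter_group P) act x (I v)) g
      * zeta (coxeter_group P) act x I v (inv u \<circ> t))"
    by (rule act_eq_sum_zeta[OF assms(1) t'])
  finally show ?thesis
    using u t by (simp add: act_sum act_mult weyl_delta finite_group)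
qed

end

theorem theorem4p4:
  fixes \<Phi> Pos \<Lambda> :: "'v::euclidean_space set"
    and x :: "'v \<Rightarrow> 'a::comm_ring_1"
    and S :: "'a set"
    and act :: "('v \<Rightarrow> 'v) \<Rightarrow> 'a \<Rightarrow> 'a"
    and I :: "('v \<Rightarrow> 'v) \<Rightarrow> 'v list"
    and f g :: 'a
    and u :: "'v \<Rightarrow> 'v"
  defines "W \<equiv> coxeter_group \<Phi>"
  assumes rs: "root_system \<Phi>"
    and pos: "positive_system \<Phi> Pos"
    and lat: "\<Phi> \<subseteq> \<Lambda>" "0 \<in> \<Lambda>" "\<forall>a\<in>\<Lambda>. \<forall>b\<in>\<Lambda>. a + b \<in> \<Lambda> \<and> - a \<in> \<Lambda>"
             "\<forall>w\<in>W. w ` \<Lambda> \<subseteq> \<Lambda>"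
    and Ssub: "0 \<in> S" "1 \<in> S" "\<forall>a\<in>S. \<forall>b\<in>S. a + b \<in> S \<and> a * b \<in> S \<and> - a \<in> S"
    and xS: "\<forall>l\<in>\<Lambda>. x l \<in> S" "x 0 = 0"
    and xreg: "\<forall>\<alpha>\<in>\<Phi>. \<forall>s\<in>S. x \<alpha> * s = 0 \<longrightarrow> s = 0"
    and xdiv: "\<forall>\<alpha>\<in>Pos. \<forall>\<alpha>'\<in>Pos. \<forall>s\<in>S. \<alpha> \<noteq> \<alpha>' \<longrightarrow>
                 (\<exists>h\<in>S. x \<alpha>' * s = x \<alpha> * h) \<longrightarrow> (\<exists>h\<in>S. s = x \<alpha> * h)"
    and Qunit: "\<forall>\<alpha>\<in>\<Phi>. \<exists>b. x \<alpha> * b = 1"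
    and Qloc: "\<forall>q. \<exists>s\<in>S. \<exists>n. q * (\<Prod>\<alpha>\<in>\<Phi>. x \<alpha>) ^ n = s"
    and act_hom: "\<forall>w\<in>W. \<forall>a b. act w (a + b) = act w a + act w b \<and> act w (a * b) = act w a * act w b"
                 "\<forall>w\<in>W. act w 1 = 1"
    and act_grp: "\<forall>a. act id a = a" "\<forall>v\<in>W. \<forall>w\<in>W. \<forall>a. act (v \<circ> w) a = act v (act w a)"
    and act_x: "\<forall>w\<in>W. \<forall>l\<in>\<Lambda>. act w (x l) = x (w l)"
    and act_S: "\<forall>w\<in>W. act w ` S \<subseteq> S"
    and red: "reduced_words W (simple_roots Pos) I"
    and fS: "f \<in> S" and gS: "g \<in> S" and uW: "u \<in> W"
  shows "hecke W act (piel act x (\<Phi> - Pos)) (\<lambda>v. cvec W act f v * cvec W act g v)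
       = (\<lambda>y. \<Sum>w\<in>W. \<Sum>v\<in>W.
            app_op W act (Yword W act x (I w)) f * act u (app_op W act (Yword W act x (I v)) g)
            * hecke W act (piel act x (\<Phi> - Pos))
                (\<lambda>t. zeta W act x I w t * weyl W act (delta u) (zeta W act x I v) t) y)"
proof -
  have "finite \<Phi>" "\<forall>\<alpha>\<in>\<Phi>. refl \<alpha> ` \<Phi> = \<Phi>"
    using rs unfolding root_system_def by auto
  then interpret coxeter_group_action \<Phi> act
    by unfold_locales (use finite_coxeter_group act_grp act_hom in \<open>auto simp: W_def\<close>)
  have u: "u \<in> coxeter_group \<Phi>"
    using uW unfolding W_def .
  have "simple_roots Pos \<subseteq> \<Phi>"
    using pos unfolding positive_system_def simple_roots_def by auto
  moreover have "\<forall>\<alpha>\<in>\<Phi>. x \<alpha> dvd 1"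
    using Qunit by (metis dvdI)
  ultimately have tri: "triangular (coxeter_group \<Phi>) (\<lambda>w. length (I w))
      (\<lambda>w. Yword (coxeter_group \<Phi>) act x (I w))"
    using triangular_Yword red unfolding W_def by blast
  define c where "c w v = app_op W act (Yword W act x (I w)) f
      * act u (app_op W act (Yword W act x (I v)) g)" for w v
  define z where "z w v t = zeta W act x I w t * weyl W act (delta u) (zeta W act x I v) t"
    for w v t
  have "cvec W act f t * cvec W act g t = (\<Sum>w\<in>W. \<Sum>v\<in>W. c w v * z w v t)" if "t \<in> W" for t
    using act_eq_sum_zeta[OF tri, of t f] act_eq_sum_weyl_zeta[OF tri u, of t g] that
    unfolding cvec_def c_def z_def W_def by (simp add: sum_product ac_simps)
  then have "hecke W act (piel act x (\<Phi> - Pos)) (\<lambda>t. cvec W act f t * cvec W act g t)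
      = hecke W act (piel act x (\<Phi> - Pos)) (\<lambda>t. \<Sum>w\<in>W. \<Sum>v\<in>W. c w v * z w v t)"
    by (intro hecke_cong) (simp_all add: W_def coxeter_group_comp)
  then show ?thesis
    by (simp add: hecke_sum hecke_scale c_def z_def fun_eq_iff)
qed

end
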